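(* Let $G=(V,E)$ be a comparability graph with $V=\{v_1,\dots,v_n\}$. For distinct $u_1,\dots,u_k\in V$, let $G\setminus u_1\cdots u_k$ be the subgraph of $G$ induced on $V\setminus\{u_1,\dots,u_k\}$. Then $$\varepsilon(G)\ge\sum_{\sigma\in\mathfrak S_n}\prod_{k=0}^{n-1}\frac{1}{\chi\big(G\setminus v_{\sigma(1)}v_{\sigma(2)}\cdots v_{\sigma(k)}\big)},$$ where the $k=0$ factor is $1/\chi(G)$, $\mathfrak S_n$ is the symmetric group on $[n]$, and $\chi$ denotes chromatic number.
   Context: A comparability graph is a simple undirected graph $G=(V,E)$ for which there is a partial order on $V$ under which two distinct vertices are comparable iff they are adjacent. For an undirected simple graph $G=(V,E)$, $\varepsilon(G)$ denotes the maximum, over all acyclic orientations of $E$, of the number of linear extensions of the partial order induced on $V$ (where $u<v$ iff there is a directed path from $u$ to $v$; a linear extension of a poset on an $n$-element set is an order-preserving bijection onto $[n]$). *)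

theory Defs
  imports Complex_Main "HOL-Library.FuncSet" "HOL-Combinatorics.Permutations"
begin

definition simple_graph :: "'a set \<Rightarrow> ('a \<times> 'a) set \<Rightarrow> bool" where
  "simple_graph V E \<longleftrightarrow> finite V \<and> E \<subseteq> V \<times> V \<and> sym E \<and> irrefl E"

definition comparability_graph :: "'a set \<Rightarrow> ('a \<times> 'a) set \<Rightarrow> bool" where
  "comparability_graph V E \<longleftrightarrow> simple_graph V E \<and>
     (\<exists>R. R \<subseteq> V \<times> V \<and> irrefl R \<and> trans R \<and>
          (\<forall>u\<in>V. \<forall>w\<in>V. u \<noteq> w \<longrightarrow> ((u, w) \<in> E \<longleftrightarrow> (u, w) \<in> R \<or> (w, u) \<in> R)))"

definition acyclic_orientation :: "('a \<times> 'a) set \<Rightarrow> ('a \<times> 'a) set \<Rightarrow> bool" where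
  "acyclic_orientation E D \<longleftrightarrow> D \<subseteq> E \<and>
     (\<forall>(u, w)\<in>E. ((u, w) \<in> D \<longleftrightarrow> (w, u) \<notin> D)) \<and> acyclic D"

definition linear_extensions :: "'a set \<Rightarrow> ('a \<times> 'a) set \<Rightarrow> ('a \<Rightarrow> nat) set" where
  "linear_extensions V D = {f \<in> V \<rightarrow>\<^sub>E {1..card V}. bij_betw f V {1..card V} \<and>
     (\<forall>u\<in>V. \<forall>w\<in>V. (u, w) \<in> D\<^sup>+ \<longrightarrow> f u < f w)}"

definition num_linear_extensions :: "'a set \<Rightarrow> ('a \<times> 'a) set \<Rightarrow> nat" where
  "num_linear_extensions V D = card (linear_extensions V D)"

definition eps :: "'a set \<Rightarrow> ('a \<times> 'a) set \<Rightarrow> nat" where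
  "eps V E = Max (num_linear_extensions V ` {D. acyclic_orientation E D})"

definition chromatic_number :: "'a set \<Rightarrow> ('a \<times> 'a) set \<Rightarrow> nat" where
  "chromatic_number V E = (LEAST k. \<exists>c :: 'a \<Rightarrow> nat.
      (\<forall>v\<in>V. c v < k) \<and> (\<forall>(u, w)\<in>E. c u \<noteq> c w))"

definition del_vertices_E :: "'a set \<Rightarrow> ('a \<times> 'a) set \<Rightarrow> 'a set \<Rightarrow> ('a \<times> 'a) set" where
  "del_vertices_E V E S = E \<inter> ((V - S) \<times> (V - S))"

end

theory Submission
  imports Defs "HOL-Combinatorics.Multiset_Permutations"
begin

text \<open>
  Write e(W) for the number of linear extensions of a strict order R on a finite set W.
  Two facts about e drive the proof:
  (1) e(W) = sum over minimal m of e(W - {m})  (classify by the first element), and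
  (2) for every antichain A, sum over x in A of e(W - {x}) is at most e(W)
      (induction on |W| using (1) and a regrouping of the double sum).
  If every comparability of R is an edge of a graph on W, the colour classes of an optimal
  colouring are antichains, so (2) gives  sum over x of e(W - {x}) <= chi(W) * e(W).

  The right-hand side of the theorem is the "removal sum" S(V) over all orders of deleting
  the vertices, weighted by the product of 1 / chi of the remaining induced subgraphs.  It
  satisfies S(W) = (1 / chi(W)) * sum over x of S(W - {x}), so comparing the two recursions
  by induction yields S(V) <= e(V).  Taking R to be the partial order of the comparability
  graph, an acyclic orientation, gives e(V) <= eps(G).
\<close>

definition lin_ext :: "'a set \<Rightarrow> ('a \<times> 'a) set \<Rightarrow> ('a \<Rightarrow> nat) set" where
  "lin_ext W R = {f \<in> W \<rightarrow>\<^sub>E {1..card W}. bij_betw f W {1..card W} \<and>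
     (\<forall>u\<in>W. \<forall>w\<in>W. (u, w) \<in> R \<longrightarrow> f u < f w)}"

definition minimal_elems :: "'a set \<Rightarrow> ('a \<times> 'a) set \<Rightarrow> 'a set" where
  "minimal_elems W R = {m \<in> W. \<forall>u\<in>W. (u, m) \<notin> R}"

lemma lin_ext_image: "f \<in> lin_ext W R \<Longrightarrow> f ` W = {1..card W}"
  unfolding lin_ext_def bij_betw_def by blast

lemma lin_ext_inj: "f \<in> lin_ext W R \<Longrightarrow> inj_on f W"
  unfolding lin_ext_def bij_betw_def by blast

lemma lin_ext_range: "f \<in> lin_ext W R \<Longrightarrow> x \<in> W \<Longrightarrow> f x \<in> {1..card W}"
  using lin_ext_image by blast

lemma lin_ext_mono: "f \<in> lin_ext W R \<Longrightarrow> u \<in> W \<Longrightarrow> w \<in> W \<Longrightarrow> (u, w) \<in> R \<Longrightarrow> f u < f w"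
  unfolding lin_ext_def by blast

lemma lin_ext_undefined: "f \<in> lin_ext W R \<Longrightarrow> x \<notin> W \<Longrightarrow> f x = undefined"
  unfolding lin_ext_def using PiE_arb by blast

text \<open>For finite W, surjectivity onto the labels is automatic, so it suffices to check
  that a labelling is injective and order preserving.\<close>
lemma lin_ext_iff:
  assumes "finite W"
  shows "f \<in> lin_ext W R \<longleftrightarrow> f \<in> W \<rightarrow>\<^sub>E {1..card W} \<and> inj_on f W \<and>
           (\<forall>u\<in>W. \<forall>w\<in>W. (u, w) \<in> R \<longrightarrow> f u < f w)"
proof -
  have "bij_betw f W {1..card W}" if "f \<in> W \<rightarrow>\<^sub>E {1..card W}" "inj_on f W"
  proof -
    have "f ` W \<subseteq> {1..card W}" using that(1) by (auto dest: PiE_mem)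
    moreover have "card (f ` W) = card {1..card W}" using that(2) by (simp add: card_image)
    ultimately show ?thesis using that(2) by (simp add: bij_betw_def card_subset_eq)
  qed
  then show ?thesis unfolding lin_ext_def bij_betw_def by blast
qed

lemma finite_lin_ext: "finite W \<Longrightarrow> finite (lin_ext W R)"
  by (rule finite_subset[of _ "W \<rightarrow>\<^sub>E {1..card W}"]) (auto simp: lin_ext_def finite_PiE)

lemma lin_ext_empty: "lin_ext {} R = {\<lambda>_. undefined}"
  by (auto simp: lin_ext_def bij_betw_def)

text \<open>Deleting the element labelled 1 and shifting all other labels down by one, and the
  inverse operation inserting m with label 1.\<close>
definition shift_down :: "'a set \<Rightarrow> ('a \<Rightarrow> nat) \<Rightarrow> 'a \<Rightarrow> nat" where
  "shift_down U f = (\<lambda>x. if x \<in> U then f x - 1 else undefined)"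

definition shift_up :: "'a \<Rightarrow> 'a set \<Rightarrow> ('a \<Rightarrow> nat) \<Rightarrow> 'a \<Rightarrow> nat" where
  "shift_up m U g = (\<lambda>x. if x = m then 1 else if x \<in> U then g x + 1 else undefined)"

lemma lin_ext_others_ge_2:
  assumes "f \<in> lin_ext W R" "m \<in> W" "f m = 1" "x \<in> W - {m}"
  shows "f x \<ge> 2"
proof -
  have "f x \<in> {1..card W}" "inj_on f W"
    using lin_ext_range[OF assms(1)] lin_ext_inj[OF assms(1)] assms(4) by auto
  moreover have "f x \<noteq> f m" using \<open>inj_on f W\<close> assms(2,4) by (auto dest: inj_onD)
  ultimately show ?thesis using assms(3) by auto
qed

lemma shift_down_lin_ext:
  assumes fin: "finite W" and f: "f \<in> lin_ext W R" and m: "m \<in> W" "f m = 1"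
  shows "shift_down (W - {m}) f \<in> lin_ext (W - {m}) R"
proof -
  let ?g = "shift_down (W - {m}) f"
  have ge2: "f x \<ge> 2" if "x \<in> W - {m}" for x using lin_ext_others_ge_2[OF f m that] .
  have card: "card (W - {m}) = card W - 1" using fin m by simp
  have fW: "f \<in> W \<rightarrow>\<^sub>E {1..card W}" "inj_on f W" "\<forall>u\<in>W. \<forall>w\<in>W. (u, w) \<in> R \<longrightarrow> f u < f w"
    using f fin by (simp_all add: lin_ext_iff)
  have "?g x \<in> {1..card (W - {m})}" if "x \<in> W - {m}" for x
    using PiE_mem[OF fW(1), of x] ge2[OF that] that by (auto simp: shift_down_def card)
  then have "?g \<in> (W - {m}) \<rightarrow>\<^sub>E {1..card (W - {m})}"
    by (auto simp: PiE_iff shift_down_def extensional_def)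
  moreover have "inj_on ?g (W - {m})"
  proof (rule inj_onI)
    fix x y assume x: "x \<in> W - {m}" and y: "y \<in> W - {m}" and "?g x = ?g y"
    then have "f x = f y" using ge2[OF x] ge2[OF y] by (simp add: shift_down_def)
    then show "x = y" using fW(2) x y by (auto dest: inj_onD)
  qed
  moreover have "\<forall>u\<in>W - {m}. \<forall>w\<in>W - {m}. (u, w) \<in> R \<longrightarrow> ?g u < ?g w"
  proof (intro ballI impI)
    fix u w assume u: "u \<in> W - {m}" and w: "w \<in> W - {m}" and "(u, w) \<in> R"
    then have "f u < f w" using fW(3) by blast
    then show "?g u < ?g w" using ge2[OF u] u w by (simp add: shift_down_def)
  qed
  ultimately show ?thesis using fin by (simp add: lin_ext_iff)
qed

text \<open>Conversely, giving a minimal element m the label 1 extends a linear extension of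
  W - {m} to one of W; minimality is what keeps the new labelling order preserving.\<close>
lemma shift_up_lin_ext:
  assumes fin: "finite W" and m: "m \<in> minimal_elems W R" and g: "g \<in> lin_ext (W - {m}) R"
  shows "shift_up m (W - {m}) g \<in> lin_ext W R"
proof -
  let ?f = "shift_up m (W - {m}) g"
  have mW: "m \<in> W" using m by (simp add: minimal_elems_def)
  have card: "card (W - {m}) = card W - 1" "card W \<ge> 1"
    using fin mW by (auto simp: Suc_le_eq card_gt_0_iff)
  have f_m: "?f m = 1" by (simp add: shift_up_def)
  have f_rest: "?f x = g x + 1" "g x \<in> {1..card W - 1}" if "x \<in> W - {m}" for x
    using that lin_ext_range[OF g that] card(1) by (simp_all add: shift_up_def)
  have "?f x \<in> {1..card W}" if "x \<in> W" for x
    using that f_m f_rest[of x] card(2) by (cases "x = m") auto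
  then have "?f \<in> W \<rightarrow>\<^sub>E {1..card W}"
    using mW by (auto simp: PiE_iff shift_up_def extensional_def)
  moreover have "inj_on ?f W"
  proof -
    have "inj_on ?f (W - {m})"
      using lin_ext_inj[OF g] by (simp add: inj_on_def f_rest)
    moreover have "?f m \<notin> ?f ` (W - {m})" using f_m f_rest by force
    ultimately show ?thesis using insert_Diff[OF mW] inj_on_insert[of ?f m "W - {m}"] by simp
  qed
  moreover have "?f u < ?f w" if "u \<in> W" "w \<in> W" "(u, w) \<in> R" for u w
  proof -
    have w: "w \<in> W - {m}" using m that by (auto simp: minimal_elems_def)
    show ?thesis
    proof (cases "u = m")
      case True then show ?thesis using f_m f_rest[OF w] by simp
    next
      case False
      then show ?thesis using f_rest w that lin_ext_mono[OF g, of u w] by simp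
    qed
  qed
  ultimately show ?thesis using fin by (simp add: lin_ext_iff)
qed

lemma lin_ext_first_bij:
  assumes fin: "finite W" and m: "m \<in> minimal_elems W R"
  shows "bij_betw (shift_down (W - {m})) {f \<in> lin_ext W R. f m = 1} (lin_ext (W - {m}) R)"
proof (rule bij_betw_byWitness[where f' = "shift_up m (W - {m})"])
  have mW: "m \<in> W" using m by (simp add: minimal_elems_def)
  show "\<forall>f\<in>{f \<in> lin_ext W R. f m = 1}. shift_up m (W - {m}) (shift_down (W - {m}) f) = f"
  proof (intro ballI ext)
    fix f x assume f: "f \<in> {f \<in> lin_ext W R. f m = 1}"
    consider "x = m" | "x \<in> W - {m}" | "x \<notin> W" by blast
    then show "shift_up m (W - {m}) (shift_down (W - {m}) f) x = f x"
    proof cases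
      case 1 then show ?thesis using f by (simp add: shift_up_def)
    next
      case 2 then show ?thesis using lin_ext_others_ge_2[of f W R m x] f mW
        by (simp add: shift_up_def shift_down_def)
    next
      case 3 then show ?thesis using f mW lin_ext_undefined[of f W R x] by (auto simp: shift_up_def)
    qed
  qed
  show "\<forall>g\<in>lin_ext (W - {m}) R. shift_down (W - {m}) (shift_up m (W - {m}) g) = g"
  proof (intro ballI ext)
    fix g x assume "g \<in> lin_ext (W - {m}) R"
    then show "shift_down (W - {m}) (shift_up m (W - {m}) g) x = g x"
      using lin_ext_undefined[of g "W - {m}" R x]
      by (cases "x \<in> W - {m}") (auto simp: shift_up_def shift_down_def)
  qed
  show "shift_down (W - {m}) ` {f \<in> lin_ext W R. f m = 1} \<subseteq> lin_ext (W - {m}) R"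
  proof (rule image_subsetI)
    fix f assume "f \<in> {f \<in> lin_ext W R. f m = 1}"
    then show "shift_down (W - {m}) f \<in> lin_ext (W - {m}) R"
      using shift_down_lin_ext[OF fin _ mW] by blast
  qed
  show "shift_up m (W - {m}) ` lin_ext (W - {m}) R \<subseteq> {f \<in> lin_ext W R. f m = 1}"
  proof (rule image_subsetI)
    fix g assume g: "g \<in> lin_ext (W - {m}) R"
    have "shift_up m (W - {m}) g m = 1" by (simp add: shift_up_def)
    then show "shift_up m (W - {m}) g \<in> {f \<in> lin_ext W R. f m = 1}"
      using shift_up_lin_ext[OF fin m g] by blast
  qed
qed

lemma lin_ext_label_1:
  assumes fin: "finite W" and ne: "W \<noteq> {}" and f: "f \<in> lin_ext W R"
  obtains m where "m \<in> minimal_elems W R" "f m = 1"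
proof -
  have "1 \<in> {1..card W}" using fin ne by (simp add: Suc_leI card_gt_0_iff)
  then obtain m where m: "m \<in> W" "f m = 1" using lin_ext_image[OF f] by (metis imageE)
  have "(u, m) \<notin> R" if "u \<in> W" for u
  proof
    assume "(u, m) \<in> R"
    then have "f u < f m" using lin_ext_mono[OF f that m(1)] by blast
    then have "f u < 1" using m(2) by simp
    moreover have "f u \<ge> 1" using lin_ext_range[OF f that] by simp
    ultimately show False by simp
  qed
  then have "m \<in> minimal_elems W R" using m(1) by (simp add: minimal_elems_def)
  then show thesis using m(2) by (rule that)
qed

text \<open>The standard recursion e(W) = sum over minimal m of e(W - {m}) for the number e of
  linear extensions: classify linear extensions by their first element.\<close>
lemma card_lin_ext_rec:
  assumes fin: "finite W" and ne: "W \<noteq> {}"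
  shows "card (lin_ext W R) = (\<Sum>m\<in>minimal_elems W R. card (lin_ext (W - {m}) R))"
proof -
  let ?M = "minimal_elems W R" and ?S = "\<lambda>m. {f \<in> lin_ext W R. f m = 1}"
  have split: "lin_ext W R = (\<Union>m\<in>?M. ?S m)"
    using lin_ext_label_1[OF fin ne] by blast
  have disjoint: "?S i \<inter> ?S j = {}" if "i \<in> ?M" "j \<in> ?M" "i \<noteq> j" for i j
  proof (rule equals0I)
    fix f assume f: "f \<in> ?S i \<inter> ?S j"
    have "i \<in> W" "j \<in> W" using that by (auto simp: minimal_elems_def)
    moreover have "inj_on f W" using f lin_ext_inj by blast
    ultimately have "f i \<noteq> f j" using \<open>i \<noteq> j\<close> by (simp add: inj_on_contraD)
    then show False using f by simp
  qed
  have "card (\<Union>m\<in>?M. ?S m) = (\<Sum>m\<in>?M. card (?S m))"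
  proof (rule card_UN_disjoint)
    show "finite ?M" using fin by (simp add: minimal_elems_def)
    show "\<forall>m\<in>?M. finite (?S m)" using finite_lin_ext[OF fin, of R] by simp
    show "\<forall>i\<in>?M. \<forall>j\<in>?M. i \<noteq> j \<longrightarrow> ?S i \<inter> ?S j = {}" using disjoint by blast
  qed
  also have "\<dots> = (\<Sum>m\<in>?M. card (lin_ext (W - {m}) R))"
    using lin_ext_first_bij[OF fin] by (intro sum.cong refl bij_betw_same_card)
  finally show ?thesis unfolding split[symmetric] .
qed

definition antichain :: "('a \<times> 'a) set \<Rightarrow> 'a set \<Rightarrow> bool" where
  "antichain R A \<longleftrightarrow> (\<forall>a\<in>A. \<forall>b\<in>A. (a, b) \<notin> R)"

definition new_minimal :: "'a set \<Rightarrow> ('a \<times> 'a) set \<Rightarrow> 'a \<Rightarrow> 'a set" where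
  "new_minimal W R x = minimal_elems (W - {x}) R - minimal_elems W R"

lemma minimal_elems_Diff:
  "minimal_elems (W - {x}) R = (minimal_elems W R - {x}) \<union> new_minimal W R x"
  by (auto simp: minimal_elems_def new_minimal_def)

lemma new_minimal_subset: "new_minimal W R x \<subseteq> W - {x}"
  by (auto simp: minimal_elems_def new_minimal_def)

lemma new_minimal_above: "n \<in> new_minimal W R x \<Longrightarrow> (x, n) \<in> R"
  by (auto simp: minimal_elems_def new_minimal_def)

lemma new_minimal_empty:
  assumes "irrefl R" "trans R" "x \<in> W" "x \<notin> minimal_elems W R"
  shows "new_minimal W R x = {}"
proof (rule ccontr)
  assume "new_minimal W R x \<noteq> {}"
  then obtain n where n: "n \<in> new_minimal W R x" by blast
  then have "(x, n) \<in> R" using new_minimal_above[of n W R x] by blast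
  obtain z where z: "z \<in> W" "(z, x) \<in> R" using assms(3,4) by (auto simp: minimal_elems_def)
  then have "(z, n) \<in> R" using \<open>(x, n) \<in> R\<close> assms(2) by (meson transD)
  moreover have "z \<noteq> x" using z(2) assms(1) by (auto simp: irrefl_def)
  ultimately show False using n z by (auto simp: new_minimal_def minimal_elems_def)
qed

text \<open>The antichain used for the induction step on W - {m}: if m belongs to A it is
  replaced by the elements that become minimal after removing m.\<close>
definition shifted_antichain :: "'a set \<Rightarrow> ('a \<times> 'a) set \<Rightarrow> 'a set \<Rightarrow> 'a \<Rightarrow> 'a set" where
  "shifted_antichain W R A m = (if m \<in> A then (A - {m}) \<union> new_minimal W R m else A)"

text \<open>The shifted antichain is again an antichain, now inside W - {m}: a new minimal element
  lies above m, so it is incomparable to the rest of A by transitivity.\<close>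
lemma shifted_antichain:
  assumes tr: "trans R" and A: "antichain R A" "A \<subseteq> W"
  shows "antichain R (shifted_antichain W R A m)" "shifted_antichain W R A m \<subseteq> W - {m}"
proof -
  show "antichain R (shifted_antichain W R A m)"
  proof (cases "m \<in> A")
    case True
    have "(a, b) \<notin> R"
      if a: "a \<in> (A - {m}) \<union> new_minimal W R m" and b: "b \<in> (A - {m}) \<union> new_minimal W R m" for a b
    proof
      assume ab: "(a, b) \<in> R"
      consider "a \<in> A" "b \<in> A" | "b \<in> new_minimal W R m" | "a \<in> new_minimal W R m" "b \<in> A - {m}"
        using a b by blast
      then show False
      proof cases
        case 1 then show ?thesis using A(1) ab unfolding antichain_def by blast
      next
        case 2
        have "a \<in> W - {m}" using a A(2) new_minimal_subset[of W R m] by blast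
        then show False using 2 ab unfolding new_minimal_def minimal_elems_def by blast
      next
        case 3
        then have "(m, a) \<in> R" using new_minimal_above[of a W R m] by blast
        then have "(m, b) \<in> R" using ab tr by (meson transD)
        then show False using A(1) True 3 unfolding antichain_def by blast
      qed
    qed
    then show ?thesis using True unfolding shifted_antichain_def antichain_def by simp
  next
    case False
    then show ?thesis using A(1) by (simp add: shifted_antichain_def)
  qed
  show "shifted_antichain W R A m \<subseteq> W - {m}"
    using A(2) new_minimal_subset[of W R m] by (auto simp: shifted_antichain_def)
qed

lemma card_lin_ext_Diff:
  assumes fin: "finite W" and ne: "W - {x} \<noteq> {}"
  shows "card (lin_ext (W - {x}) R) =
    (\<Sum>m\<in>minimal_elems W R - {x}. card (lin_ext (W - {m} - {x}) R)) +
    (\<Sum>n\<in>new_minimal W R x. card (lin_ext (W - {x} - {n}) R))"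
proof -
  have swap: "W - {x} - {m} = W - {m} - {x}" for m by blast
  have fin_min: "finite (minimal_elems W R)" using fin by (simp add: minimal_elems_def)
  have fin_new: "finite (new_minimal W R x)"
    using fin new_minimal_subset[of W R x] by (meson finite_Diff finite_subset)
  have "card (lin_ext (W - {x}) R) = (\<Sum>m\<in>minimal_elems (W - {x}) R. card (lin_ext (W - {x} - {m}) R))"
    using fin ne by (simp add: card_lin_ext_rec)
  also have "\<dots> = (\<Sum>m\<in>minimal_elems W R - {x}. card (lin_ext (W - {x} - {m}) R)) +
    (\<Sum>n\<in>new_minimal W R x. card (lin_ext (W - {x} - {n}) R))"
    unfolding minimal_elems_Diff using fin_min fin_new
    by (intro sum.union_disjoint) (auto simp: new_minimal_def)
  finally show ?thesis by (simp only: swap)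
qed

text \<open>Only minimal elements expose new minimal elements, so a sum over the pairs
  (x, n) with x in A and n newly minimal in W - {x} can be reindexed over minimal m.\<close>
lemma sum_new_minimal_regroup:
  fixes h :: "'a \<Rightarrow> 'a \<Rightarrow> 'b::comm_monoid_add"
  assumes fin: "finite W" and irr: "irrefl R" and tr: "trans R" and A: "A \<subseteq> W"
  shows "(\<Sum>x\<in>A. \<Sum>n\<in>new_minimal W R x. h x n) =
    (\<Sum>m\<in>minimal_elems W R. if m \<in> A then \<Sum>n\<in>new_minimal W R m. h m n else 0)"
proof -
  let ?M = "minimal_elems W R" and ?N = "new_minimal W R"
  have finA: "finite A" using fin A by (rule finite_subset[rotated])
  have finM: "finite ?M" using fin by (simp add: minimal_elems_def)
  have "(\<Sum>x\<in>A. \<Sum>n\<in>?N x. h x n) = (\<Sum>m\<in>A \<inter> ?M. \<Sum>n\<in>?N m. h m n)"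
  proof (rule sum.mono_neutral_right[OF finA])
    show "\<forall>x\<in>A - A \<inter> ?M. (\<Sum>n\<in>?N x. h x n) = 0"
    proof
      fix x assume "x \<in> A - A \<inter> ?M"
      then have "?N x = {}" using A new_minimal_empty[OF irr tr, of x W] by blast
      then show "(\<Sum>n\<in>?N x. h x n) = 0" by simp
    qed
  qed auto
  also have "\<dots> = (\<Sum>m\<in>?M. if m \<in> A then \<Sum>n\<in>?N m. h m n else 0)"
    using sum.inter_restrict[OF finM, of _ A] by (simp add: Int_commute)
  finally show ?thesis .
qed

lemma sum_shifted_antichain:
  fixes h :: "'a \<Rightarrow> 'b::comm_monoid_add"
  assumes fin: "finite W" and A: "antichain R A" "A \<subseteq> W"
  shows "(\<Sum>x\<in>shifted_antichain W R A m. h x) =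
    (\<Sum>x\<in>A - {m}. h x) + (if m \<in> A then \<Sum>n\<in>new_minimal W R m. h n else 0)"
proof (cases "m \<in> A")
  case True
  have finA: "finite A" using fin A(2) by (rule finite_subset[rotated])
  have finN: "finite (new_minimal W R m)"
    using fin new_minimal_subset[of W R m] by (meson finite_Diff finite_subset)
  have "(A - {m}) \<inter> new_minimal W R m = {}"
  proof (rule equals0I)
    fix n assume "n \<in> (A - {m}) \<inter> new_minimal W R m"
    then have "n \<in> A" "(m, n) \<in> R" using new_minimal_above[of n W R m] by auto
    then show False using A(1) True unfolding antichain_def by blast
  qed
  then show ?thesis using True finA finN by (simp add: shifted_antichain_def sum.union_disjoint)
qed (simp add: shifted_antichain_def)

text \<open>The key double counting: expanding each e(W - {x}) by the recursion and regrouping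
  by the minimal element m of W that is removed together with x.\<close>
lemma sum_lin_ext_Diff_regroup:
  assumes fin: "finite W" and irr: "irrefl R" and tr: "trans R"
    and A: "antichain R A" "A \<subseteq> W" and ne: "\<forall>x\<in>A. W - {x} \<noteq> {}"
  shows "(\<Sum>x\<in>A. card (lin_ext (W - {x}) R)) =
    (\<Sum>m\<in>minimal_elems W R. \<Sum>x\<in>shifted_antichain W R A m. card (lin_ext (W - {m} - {x}) R))"
proof -
  let ?M = "minimal_elems W R" and ?N = "new_minimal W R" and ?e = "\<lambda>U. card (lin_ext U R)"
  have finA: "finite A" using fin A(2) by (rule finite_subset[rotated])
  have finM: "finite ?M" using fin by (simp add: minimal_elems_def)
  have old: "(\<Sum>x\<in>A. \<Sum>m\<in>?M - {x}. ?e (W - {m} - {x})) =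
      (\<Sum>m\<in>?M. \<Sum>x\<in>A - {m}. ?e (W - {m} - {x}))"
    using sum.swap_restrict[OF finA finM, of "\<lambda>x m. ?e (W - {m} - {x})" "\<lambda>x m. m \<noteq> x"]
    by (simp add: set_diff_eq conj_commute eq_commute)
  have new: "(\<Sum>x\<in>A. \<Sum>n\<in>?N x. ?e (W - {x} - {n})) =
    (\<Sum>m\<in>?M. if m \<in> A then \<Sum>n\<in>?N m. ?e (W - {m} - {n}) else 0)"
    by (rule sum_new_minimal_regroup[OF fin irr tr A(2)])
  have shifted: "(\<Sum>x\<in>shifted_antichain W R A m. ?e (W - {m} - {x})) =
    (\<Sum>x\<in>A - {m}. ?e (W - {m} - {x})) + (if m \<in> A then \<Sum>n\<in>?N m. ?e (W - {m} - {n}) else 0)" for m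
    by (rule sum_shifted_antichain[OF fin A])
  have "(\<Sum>x\<in>A. ?e (W - {x})) =
      (\<Sum>x\<in>A. \<Sum>m\<in>?M - {x}. ?e (W - {m} - {x})) + (\<Sum>x\<in>A. \<Sum>n\<in>?N x. ?e (W - {x} - {n}))"
    unfolding sum.distrib[symmetric] using card_lin_ext_Diff[OF fin] ne by (intro sum.cong) auto
  also have "\<dots> = (\<Sum>m\<in>?M. \<Sum>x\<in>shifted_antichain W R A m. ?e (W - {m} - {x}))"
    unfolding old new shifted by (simp add: sum.distrib)
  finally show ?thesis .
qed

lemma lin_ext_Diff_minimal_le:
  assumes "finite W" "m \<in> minimal_elems W R"
  shows "card (lin_ext (W - {m}) R) \<le> card (lin_ext W R)"
proof -
  have "W \<noteq> {}" "finite (minimal_elems W R)"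
    using assms by (auto simp: minimal_elems_def)
  then show ?thesis
    using card_lin_ext_rec[OF assms(1)] member_le_sum[OF assms(2)] by (metis (no_types, lifting) le0)
qed

text \<open>Induction on |W|: by the regrouping lemma
  the left side is a sum over minimal m of the same kind of sum for W - {m} and a shifted
  antichain, and the recursion for e(W) closes the induction.\<close>
theorem antichain_sum_lin_ext_le:
  assumes "finite W" "irrefl R" "trans R" "antichain R A" "A \<subseteq> W"
  shows "(\<Sum>x\<in>A. card (lin_ext (W - {x}) R)) \<le> card (lin_ext W R)"
  using assms
proof (induction "card W" arbitrary: W A rule: less_induct)
  case less
  note fin = less.prems(1) and irr = less.prems(2) and tr = less.prems(3) and A = less.prems(4,5)
  consider "A = {}" | "\<exists>x\<in>A. W - {x} = {}" | "A \<noteq> {}" "\<forall>x\<in>A. W - {x} \<noteq> {}" by blast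
  then show ?case
  proof cases
    case 1 then show ?thesis by simp
  next
    case 2
    then obtain x where x: "x \<in> A" "W = {x}" using A(2) by blast
    then have "A = {x}" using A(2) by blast
    moreover have "x \<in> minimal_elems W R" using x irr by (auto simp: minimal_elems_def irrefl_def)
    ultimately show ?thesis using lin_ext_Diff_minimal_le[OF fin] by simp
  next
    case 3
    let ?M = "minimal_elems W R"
    have "W \<noteq> {}" using 3 A(2) by blast
    have IH: "(\<Sum>x\<in>shifted_antichain W R A m. card (lin_ext (W - {m} - {x}) R))
        \<le> card (lin_ext (W - {m}) R)" if "m \<in> ?M" for m
    proof (rule less.hyps)
      show "card (W - {m}) < card W"
        using fin that by (intro card_Diff1_less) (auto simp: minimal_elems_def)
      show "antichain R (shifted_antichain W R A m)" "shifted_antichain W R A m \<subseteq> W - {m}"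
        using shifted_antichain[OF tr A] by blast+
    qed (use fin irr tr in auto)
    have "(\<Sum>x\<in>A. card (lin_ext (W - {x}) R)) =
        (\<Sum>m\<in>?M. \<Sum>x\<in>shifted_antichain W R A m. card (lin_ext (W - {m} - {x}) R))"
      using sum_lin_ext_Diff_regroup[OF fin irr tr A] 3 by blast
    also have "\<dots> \<le> (\<Sum>m\<in>?M. card (lin_ext (W - {m}) R))"
      using IH by (rule sum_mono)
    also have "\<dots> = card (lin_ext W R)"
      using card_lin_ext_rec[OF fin \<open>W \<noteq> {}\<close>] by simp
    finally show ?thesis .
  qed
qed

text \<open>The chromatic number is attained by some proper colouring (labelling the vertices
  injectively shows that some number of colours suffices).\<close>
lemma chromatic_number_colouring:
  assumes fin: "finite W" and F: "F \<subseteq> W \<times> W" "irrefl F"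
  obtains c :: "'a \<Rightarrow> nat" where "\<forall>v\<in>W. c v < chromatic_number W F" "\<forall>(u, w)\<in>F. c u \<noteq> c w"
proof -
  obtain h where h: "bij_betw h W {0..<card W}" using ex_bij_betw_finite_nat[OF fin] by blast
  have "\<forall>v\<in>W. h v < card W" using h by (auto simp: bij_betw_def)
  moreover have "\<forall>(u, w)\<in>F. h u \<noteq> h w"
  proof clarify
    fix u w assume uw: "(u, w) \<in> F" "h u = h w"
    then have "u = w" using F(1) h by (auto simp: bij_betw_def dest: inj_onD)
    then show False using uw(1) F(2) by (simp add: irrefl_def)
  qed
  ultimately have "\<exists>k c::'a \<Rightarrow> nat. (\<forall>v\<in>W. c v < k) \<and> (\<forall>(u, w)\<in>F. c u \<noteq> c w)" by blast
  then have "\<exists>c::'a \<Rightarrow> nat. (\<forall>v\<in>W. c v < chromatic_number W F) \<and> (\<forall>(u, w)\<in>F. c u \<noteq> c w)"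
    unfolding chromatic_number_def by (rule LeastI_ex)
  then show thesis using that by blast
qed

text \<open>Colour classes of a graph containing all comparabilities are antichains; summing
  the antichain inequality over the classes gives
  sum over x in W of e(W - {x}) at most chi(W) * e(W).\<close>
theorem sum_lin_ext_Diff_le_chromatic:
  assumes fin: "finite W" and F: "F \<subseteq> W \<times> W" "irrefl F"
    and irr: "irrefl R" and tr: "trans R" and RF: "\<forall>u\<in>W. \<forall>w\<in>W. (u, w) \<in> R \<longrightarrow> (u, w) \<in> F"
  shows "(\<Sum>x\<in>W. card (lin_ext (W - {x}) R)) \<le> chromatic_number W F * card (lin_ext W R)"
proof -
  let ?k = "chromatic_number W F" and ?e = "\<lambda>U. card (lin_ext U R)"
  obtain c :: "'a \<Rightarrow> nat" where c: "\<forall>v\<in>W. c v < ?k" "\<forall>(u, w)\<in>F. c u \<noteq> c w"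
    using chromatic_number_colouring[OF fin F] by blast
  define C where "C i = {x \<in> W. c x = i}" for i
  have W: "W = (\<Union>i<?k. C i)" using c(1) by (auto simp: C_def)
  have "(\<Sum>x\<in>(\<Union>i<?k. C i). ?e (W - {x})) = (\<Sum>i<?k. \<Sum>x\<in>C i. ?e (W - {x}))"
    using fin by (intro sum.UNION_disjoint) (auto simp: C_def)
  then have "(\<Sum>x\<in>W. ?e (W - {x})) = (\<Sum>i<?k. \<Sum>x\<in>C i. ?e (W - {x}))"
    by (simp only: W[symmetric])
  also have "\<dots> \<le> (\<Sum>i<?k. ?e W)"
  proof (rule sum_mono)
    fix i
    have "antichain R (C i)" using RF c(2) by (fastforce simp: antichain_def C_def)
    then show "(\<Sum>x\<in>C i. ?e (W - {x})) \<le> ?e W"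
      using antichain_sum_lin_ext_le[OF fin irr tr] by (simp add: C_def)
  qed
  finally show ?thesis by simp
qed

definition removal_sum :: "('a set \<Rightarrow> real) \<Rightarrow> 'a set \<Rightarrow> real" where
  "removal_sum \<phi> W = (\<Sum>xs\<in>permutations_of_set W. \<Prod>k<length xs. \<phi> (W - set (take k xs)))"

lemma removal_sum_empty: "removal_sum \<phi> {} = 1"
  by (simp add: removal_sum_def)

text \<open>Splitting off the first removed element gives the recursion
  S(W) = phi(W) * sum over x in W of S(W - {x}).\<close>
lemma removal_sum_rec:
  assumes fin: "finite W" and ne: "W \<noteq> {}"
  shows "removal_sum \<phi> W = \<phi> W * (\<Sum>x\<in>W. removal_sum \<phi> (W - {x}))"
proof -
  let ?F = "\<lambda>W xs. \<Prod>k<length xs. \<phi> (W - set (take k xs))"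
  have cons: "?F W (x # ys) = \<phi> W * ?F (W - {x}) ys" for x ys
  proof -
    have "W - set (take (Suc k) (x # ys)) = W - {x} - set (take k ys)" for k by auto
    then show ?thesis by (simp add: prod.lessThan_Suc_shift del: prod.lessThan_Suc)
  qed
  have "removal_sum \<phi> W = (\<Sum>xs\<in>(\<Union>x\<in>W. (#) x ` permutations_of_set (W - {x})). ?F W xs)"
    unfolding removal_sum_def permutations_of_set_nonempty[OF ne] ..
  also have "\<dots> = (\<Sum>x\<in>W. \<Sum>xs\<in>(#) x ` permutations_of_set (W - {x}). ?F W xs)"
    using fin by (intro sum.UNION_disjoint) auto
  also have "\<dots> = (\<Sum>x\<in>W. \<Sum>ys\<in>permutations_of_set (W - {x}). ?F W (x # ys))"
    by (rule sum.cong[OF refl]) (simp add: sum.reindex inj_on_def)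
  also have "\<dots> = \<phi> W * (\<Sum>x\<in>W. removal_sum \<phi> (W - {x}))"
    unfolding cons by (simp add: removal_sum_def sum_distrib_left)
  finally show ?thesis .
qed

lemma removal_sum_le:
  assumes fin: "finite V" and g_empty: "g {} \<ge> 1"
    and step: "\<And>U. U \<subseteq> V \<Longrightarrow> U \<noteq> {} \<Longrightarrow> \<phi> U \<ge> 0 \<and> \<phi> U * (\<Sum>x\<in>U. g (U - {x})) \<le> g U"
  shows "U \<subseteq> V \<Longrightarrow> removal_sum \<phi> U \<le> g U"
proof (induction "card U" arbitrary: U rule: less_induct)
  case less
  show ?case
  proof (cases "U = {}")
    case True then show ?thesis using g_empty by (simp add: removal_sum_empty)
  next
    case False
    have finU: "finite U" using less.prems fin by (rule finite_subset)
    have IH: "removal_sum \<phi> (U - {x}) \<le> g (U - {x})" if "x \<in> U" for x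
    proof (rule less.hyps)
      show "card (U - {x}) < card U" using finU that by (rule card_Diff1_less)
      show "U - {x} \<subseteq> V" using less.prems by blast
    qed
    have "removal_sum \<phi> U = \<phi> U * (\<Sum>x\<in>U. removal_sum \<phi> (U - {x}))"
      using finU False by (rule removal_sum_rec)
    also have "\<dots> \<le> \<phi> U * (\<Sum>x\<in>U. g (U - {x}))"
      using step[OF less.prems False] IH by (intro mult_left_mono sum_mono) auto
    also have "\<dots> \<le> g U" using step[OF less.prems False] by blast
    finally show ?thesis .
  qed
qed

definition inv_chromatic :: "('a \<times> 'a) set \<Rightarrow> 'a set \<Rightarrow> real" where
  "inv_chromatic E U = 1 / real (chromatic_number U (E \<inter> U \<times> U))"

theorem removal_sum_inv_chromatic_le:
  assumes fin: "finite V" and E: "irrefl E"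
    and irr: "irrefl R" and tr: "trans R" and RE: "\<forall>u\<in>V. \<forall>w\<in>V. (u, w) \<in> R \<longrightarrow> (u, w) \<in> E"
  shows "removal_sum (inv_chromatic E) V \<le> real (card (lin_ext V R))"
proof (rule removal_sum_le[OF fin, where g = "\<lambda>U. real (card (lin_ext U R))"])
  show "real (card (lin_ext {} R)) \<ge> 1" by (simp add: lin_ext_empty)
  fix U assume U: "U \<subseteq> V" "U \<noteq> {}"
  let ?k = "chromatic_number U (E \<inter> U \<times> U)"
  have "(\<Sum>x\<in>U. card (lin_ext (U - {x}) R)) \<le> ?k * card (lin_ext U R)"
    using U E RE finite_subset[OF U(1) fin]
    by (intro sum_lin_ext_Diff_le_chromatic[OF _ _ _ irr tr]) (auto simp: irrefl_def)
  then have "(\<Sum>x\<in>U. real (card (lin_ext (U - {x}) R))) \<le> real ?k * real (card (lin_ext U R))"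
    by (metis of_nat_le_iff of_nat_mult of_nat_sum)
  then show "inv_chromatic E U \<ge> 0 \<and>
      inv_chromatic E U * (\<Sum>x\<in>U. real (card (lin_ext (U - {x}) R))) \<le> real (card (lin_ext U R))"
    by (cases "?k = 0") (auto simp: inv_chromatic_def field_simps)
qed (rule order.refl)

lemma map_permutes_in_permutations_of_set:
  assumes inj: "inj_on v {1..n}" and \<sigma>: "\<sigma> permutes {1..n}"
  shows "map (\<lambda>i. v (\<sigma> i)) [1..<Suc n] \<in> permutations_of_set (v ` {1..n})"
proof (rule permutations_of_setI)
  have "set (map (\<lambda>i. v (\<sigma> i)) [1..<Suc n]) = v ` \<sigma> ` {1..n}"
    by (auto simp: atLeastLessThanSuc_atLeastAtMost)
  then show "set (map (\<lambda>i. v (\<sigma> i)) [1..<Suc n]) = v ` {1..n}"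
    using permutes_image[OF \<sigma>] by simp
  have "inj_on (v \<circ> \<sigma>) {1..n}"
    by (rule comp_inj_on[OF permutes_inj_on[OF \<sigma>]]) (use permutes_image[OF \<sigma>] inj in simp)
  then show "distinct (map (\<lambda>i. v (\<sigma> i)) [1..<Suc n])"
    by (simp add: distinct_map atLeastLessThanSuc_atLeastAtMost comp_def del: upt_Suc)
qed

text \<open>This translation is a bijection, since both sides have n! elements.\<close>
lemma permutes_list_bij:
  assumes inj: "inj_on v {1..n}"
  shows "bij_betw (\<lambda>\<sigma>. map (\<lambda>i. v (\<sigma> i)) [1..<Suc n]) {\<sigma>. \<sigma> permutes {1..n}}
           (permutations_of_set (v ` {1..n}))"
proof -
  let ?l = "\<lambda>\<sigma>. map (\<lambda>i. v (\<sigma> i)) [1..<Suc n]"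
  have "inj_on ?l {\<sigma>. \<sigma> permutes {1..n}}"
  proof (rule inj_onI, rule ext)
    fix \<sigma> \<tau> i assume \<sigma>: "\<sigma> \<in> {\<sigma>. \<sigma> permutes {1..n}}" and \<tau>: "\<tau> \<in> {\<sigma>. \<sigma> permutes {1..n}}"
      and eq: "?l \<sigma> = ?l \<tau>"
    show "\<sigma> i = \<tau> i"
    proof (cases "i \<in> {1..n}")
      case True
      then have "v (\<sigma> i) = v (\<tau> i)"
        using eq by (simp add: map_eq_conv atLeastLessThanSuc_atLeastAtMost del: upt_Suc)
      moreover have "\<sigma> i \<in> {1..n}" "\<tau> i \<in> {1..n}"
        using \<sigma> \<tau> True by (simp_all only: mem_Collect_eq permutes_in_image)
      ultimately show ?thesis using inj by (auto dest: inj_onD)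
    next
      case False then show ?thesis using \<sigma> \<tau> by (simp add: permutes_not_in)
    qed
  qed
  moreover have "?l ` {\<sigma>. \<sigma> permutes {1..n}} \<subseteq> permutations_of_set (v ` {1..n})"
    using map_permutes_in_permutations_of_set[OF inj] by blast
  moreover have "card {\<sigma>. \<sigma> permutes {1..n}} = card (permutations_of_set (v ` {1..n}))"
    using inj by (simp add: card_permutations card_image)
  ultimately show ?thesis
    by (simp add: bij_betw_def card_image card_subset_eq)
qed

lemma set_take_map_upt:
  assumes "k \<le> n"
  shows "set (take k (map (\<lambda>i. v (\<sigma> i)) [1..<Suc n])) = v ` \<sigma> ` {1..k}"
proof -
  have "take k [1..<Suc n] = [1..<Suc k]" using assms by (simp add: take_upt del: upt_Suc)
  then show ?thesis by (simp add: take_map atLeastLessThanSuc_atLeastAtMost image_image del: upt_Suc)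
qed

lemma sum_permutes_eq_removal_sum:
  fixes n :: nat
  assumes "inj_on v {1..n}"
  shows "(\<Sum>\<sigma>\<in>{\<sigma>. \<sigma> permutes {1..n}}. \<Prod>k<n. \<phi> (v ` {1..n} - v ` \<sigma> ` {1..k}))
    = removal_sum \<phi> (v ` {1..n})"
proof -
  let ?l = "\<lambda>\<sigma>. map (\<lambda>i. v (\<sigma> i)) [1..<Suc n]" and ?V = "v ` {1..n}"
  let ?F = "\<lambda>xs. \<Prod>k<length xs. \<phi> (?V - set (take k xs))"
  have term_eq: "(\<Prod>k<n. \<phi> (?V - v ` \<sigma> ` {1..k})) = ?F (?l \<sigma>)" for \<sigma>
  proof (rule prod.cong)
    fix k assume "k \<in> {..<length (?l \<sigma>)}"
    then have "set (take k (?l \<sigma>)) = v ` \<sigma> ` {1..k}"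
      using set_take_map_upt[of k n v \<sigma>] by (simp del: upt_Suc)
    then show "\<phi> (?V - v ` \<sigma> ` {1..k}) = \<phi> (?V - set (take k (?l \<sigma>)))" by (simp only:)
  qed simp
  have "(\<Sum>\<sigma>\<in>{\<sigma>. \<sigma> permutes {1..n}}. \<Prod>k<n. \<phi> (?V - v ` \<sigma> ` {1..k}))
      = (\<Sum>\<sigma>\<in>{\<sigma>. \<sigma> permutes {1..n}}. ?F (?l \<sigma>))"
    by (rule sum.cong[OF refl]) (rule term_eq)
  also have "\<dots> = removal_sum \<phi> ?V"
    unfolding removal_sum_def by (rule sum.reindex_bij_betw[OF permutes_list_bij[OF assms]])
  finally show ?thesis .
qed

lemma comparability_graph_orientation:
  assumes "comparability_graph V E"
  obtains R where "acyclic_orientation E R" "irrefl R" "trans R" "R \<subseteq> E"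
proof -
  have E: "finite V" "E \<subseteq> V \<times> V" "irrefl E"
    using assms by (auto simp: comparability_graph_def simple_graph_def)
  obtain R where R: "R \<subseteq> V \<times> V" "irrefl R" "trans R"
    and comp: "\<forall>u\<in>V. \<forall>w\<in>V. u \<noteq> w \<longrightarrow> ((u, w) \<in> E \<longleftrightarrow> (u, w) \<in> R \<or> (w, u) \<in> R)"
    using assms by (auto simp: comparability_graph_def)
  have RE: "R \<subseteq> E"
  proof
    fix p assume p: "p \<in> R"
    obtain u w where p_uw: "p = (u, w)" by fastforce
    then have "u \<in> V" "w \<in> V" "u \<noteq> w" using p R(1,2) by (auto simp: irrefl_def)
    then show "p \<in> E" using comp p p_uw by blast
  qed
  have "\<forall>(u, w)\<in>E. (u, w) \<in> R \<longleftrightarrow> (w, u) \<notin> R"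
  proof clarify
    fix u w assume uw: "(u, w) \<in> E"
    then have "u \<in> V" "w \<in> V" "u \<noteq> w" using E(2,3) by (auto simp: irrefl_def)
    then have "(u, w) \<in> R \<or> (w, u) \<in> R" using comp uw by blast
    moreover have "\<not> ((u, w) \<in> R \<and> (w, u) \<in> R)" using R(2,3) by (meson irrefl_def transD)
    ultimately show "(u, w) \<in> R \<longleftrightarrow> (w, u) \<notin> R" by blast
  qed
  moreover have "acyclic R" using R(2,3) by (simp add: acyclic_irrefl)
  ultimately have "acyclic_orientation E R" using RE by (simp add: acyclic_orientation_def)
  then show thesis using that R(2,3) RE by blast
qed

lemma linear_extensions_trans: "trans R \<Longrightarrow> linear_extensions V R = lin_ext V R"
  by (simp add: linear_extensions_def lin_ext_def trancl_id)

lemma num_linear_extensions_le_eps: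
  assumes "finite E" "acyclic_orientation E D"
  shows "num_linear_extensions V D \<le> eps V E"
proof -
  have "{D. acyclic_orientation E D} \<subseteq> Pow E" by (auto simp: acyclic_orientation_def)
  then have "finite {D. acyclic_orientation E D}" using assms(1) by (meson finite_Pow_iff finite_subset)
  then show ?thesis unfolding eps_def using assms(2) by (intro Max_ge) auto
qed

theorem theorem4p3:
  fixes V :: "'a set" and E :: "('a \<times> 'a) set" and n :: nat and v :: "nat \<Rightarrow> 'a"
  assumes "comparability_graph V E"
    and "inj_on v {1..n}" and "V = v ` {1..n}"
  shows "real (eps V E) \<ge>
    (\<Sum>\<sigma> \<in> {\<sigma>. \<sigma> permutes {1..n}}.
       \<Prod>k<n. 1 / real (chromatic_number
          (V - v ` \<sigma> ` {1..k}) (del_vertices_E V E (v ` \<sigma> ` {1..k}))))"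
proof -
  have fin: "finite V" "finite E" and irrE: "irrefl E"
    using assms(1) finite_subset[of E "V \<times> V"]
    by (auto simp: comparability_graph_def simple_graph_def)
  obtain R where R: "acyclic_orientation E R" "irrefl R" "trans R" "R \<subseteq> E"
    using comparability_graph_orientation[OF assms(1)] .
  have "(\<Sum>\<sigma> \<in> {\<sigma>. \<sigma> permutes {1..n}}. \<Prod>k<n. 1 / real (chromatic_number
          (V - v ` \<sigma> ` {1..k}) (del_vertices_E V E (v ` \<sigma> ` {1..k}))))
      = removal_sum (inv_chromatic E) V"
    using sum_permutes_eq_removal_sum[OF assms(2), of "inv_chromatic E"] assms(3)
    by (simp add: inv_chromatic_def del_vertices_E_def)
  also have "\<dots> \<le> real (card (lin_ext V R))"
    using removal_sum_inv_chromatic_le[OF fin(1) irrE R(2,3)] R(4) by blast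
  also have "\<dots> \<le> real (eps V E)"
    using num_linear_extensions_le_eps[OF fin(2) R(1), of V] linear_extensions_trans[OF R(3)]
    by (simp add: num_linear_extensions_def)
  finally show ?thesis .
qed

end
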